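(* Let $t\geq 2$ and let $q\geq 4$ be a prime power. If $M^{(t)}_{2t\times t}(F_q)\neq\emptyset$, then there exists a $q^t$-CMS$(q^t,t)$.
   Context: $M^{(t)}_{k\times s}(F_q)$ denotes the set of $k\times s$ matrices over the finite field $F_q$ in which any $t$ rows are linearly independent. An MS$(n,t)$ is an $n\times n$ matrix with entries $0,\dots,n^2-1$ such that for each $e=1,\dots,t$ the entrywise $e$-th power has all row sums, column sums, main-diagonal sum and back-diagonal sum (entries $(i,n-1-i)$) equal. With $S_e(n)=\frac1n\sum_{k=0}^{n^2-1}k^e$, a family $\{B_0,\dots,B_{m-1}\}$ of MS$(n,t)$s, $B_s=(b^{(s)}_{i,j})$, $i,j\in\{0,\dots,n-1\}$, is an $m$-CMS$(n,t)$ if $\sum_{s}\sum_{j}(b^{(s)}_{i,j})^{t+1}=mS_{t+1}(n)$ for every $i$, $\sum_{s}\sum_{i}(b^{(s)}_{i,j})^{t+1}=mS_{t+1}(n)$ for every $j$, and $\sum_s\sum_i(b^{(s)}_{i,i})^{t+1}=\sum_s\sum_i(b^{(s)}_{i,n-1-i})^{t+1}=mS_{t+1}(n)$. *)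

theory Defs
  imports Complex_Main
begin

text \<open>A k x s matrix over a field is modelled as a function nat => nat => 'a,
  only the entries with row index < k and column index < s being relevant.\<close>

definition rows_lin_indep :: "nat \<Rightarrow> (nat \<Rightarrow> nat \<Rightarrow> 'a::field) \<Rightarrow> nat set \<Rightarrow> bool" where
  "rows_lin_indep s A R \<longleftrightarrow>
     (\<forall>c :: nat \<Rightarrow> 'a. (\<forall>j<s. (\<Sum>i\<in>R. c i * A i j) = 0) \<longrightarrow> (\<forall>i\<in>R. c i = 0))"

text \<open>The set M^{(t)}_{k x s}(F): k x s matrices in which any t rows are linearly independent.
  Entries outside the index range are normalised to 0 so that each matrix has one representative.\<close>
definition M_t :: "nat \<Rightarrow> nat \<Rightarrow> nat \<Rightarrow> (nat \<Rightarrow> nat \<Rightarrow> 'a::field) set" where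
  "M_t t k s = {A. (\<forall>i j. (i \<ge> k \<or> j \<ge> s) \<longrightarrow> A i j = 0) \<and>
                   (\<forall>R. R \<subseteq> {..<k} \<and> card R = t \<longrightarrow> rows_lin_indep s A R)}"

definition is_MS :: "nat \<Rightarrow> nat \<Rightarrow> (nat \<Rightarrow> nat \<Rightarrow> nat) \<Rightarrow> bool" where
  "is_MS n t B \<longleftrightarrow>
     bij_betw (\<lambda>(i, j). B i j) ({..<n} \<times> {..<n}) {..<n^2} \<and>
     (\<forall>e\<in>{1..t}. \<exists>c::nat.
        (\<forall>i<n. (\<Sum>j<n. B i j ^ e) = c) \<and>
        (\<forall>j<n. (\<Sum>i<n. B i j ^ e) = c) \<and>
        (\<Sum>i<n. B i i ^ e) = c \<and>
        (\<Sum>i<n. B i (n - 1 - i) ^ e) = c)"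

definition S_pow :: "nat \<Rightarrow> nat \<Rightarrow> real" where
  "S_pow e n = (1 / real n) * (\<Sum>k<n^2. real k ^ e)"

definition is_CMS :: "nat \<Rightarrow> nat \<Rightarrow> nat \<Rightarrow> (nat \<Rightarrow> nat \<Rightarrow> nat \<Rightarrow> nat) \<Rightarrow> bool" where
  "is_CMS m n t B \<longleftrightarrow>
     inj_on B {..<m} \<and>
     (\<forall>s<m. is_MS n t (B s)) \<and>
     (\<forall>i<n. (\<Sum>s<m. \<Sum>j<n. real (B s i j) ^ (t+1)) = real m * S_pow (t+1) n) \<and>
     (\<forall>j<n. (\<Sum>s<m. \<Sum>i<n. real (B s i j) ^ (t+1)) = real m * S_pow (t+1) n) \<and>
     (\<Sum>s<m. \<Sum>i<n. real (B s i i) ^ (t+1)) = real m * S_pow (t+1) n \<and>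
     (\<Sum>s<m. \<Sum>i<n. real (B s i (n - 1 - i)) ^ (t+1)) = real m * S_pow (t+1) n"

end

theory Submission
  imports Defs "HOL-Library.FuncSet" "HOL-Library.Cardinality"
begin

text \<open>Index rows and columns by vectors of F_q^t and write entries in base q, i.e. as vectors of
  F_q^2t. With A \<in> M^(t)_2t\<times>t and \<Lambda> = diag(l1,...,l1,l2,...,l2), where l1 \<noteq> l2 avoid 0 and \<plusminus>1,
  the square B_s has entry A x + \<Lambda> A y + (s, 0) in cell (x, y). Since any t rows of A are
  independent, the two halves of the digits determine x + l1 y and x + l2 y, so B_s is a
  bijection onto 0..q^2t - 1. Each row, column and diagonal of B_s is an affine map
  z \<mapsto> R A z + c with R diagonal and invertible; expanding the e-th power of an entry into
  monomials in at most e \<le> t digits shows that all these lines have the same e-th power sums.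
  Summing over s as well, each line sweeps F_q^2t exactly once, which yields the (t+1)-th power
  conditions. The back diagonal is such a line too, because the indices are enumerated so that
  reversing the index corresponds to z \<mapsto> 1 - z.\<close>

lemma bij_betw_if_inj_on_card_eq:
  assumes "finite B" "inj_on f A" "f ` A \<subseteq> B" "card A = card B"
  shows "bij_betw f A B"
  using assms card_image card_subset_eq unfolding bij_betw_def by metis

lemma card_PiE_lessThan_UNIV [simp]:
  "card ({..<n} \<rightarrow>\<^sub>E (UNIV :: 'a::finite set)) = CARD('a) ^ n"
  by (simp add: card_PiE)

definition mat_vec :: "nat \<Rightarrow> (nat \<Rightarrow> nat \<Rightarrow> 'a::comm_semiring_0) \<Rightarrow> (nat \<Rightarrow> 'a) \<Rightarrow> nat \<Rightarrow> 'a" where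
  "mat_vec s A z = (\<lambda>k. \<Sum>j<s. A k j * z j)"

lemma mat_vec_add: "mat_vec s A (\<lambda>j. x j + y j) k = mat_vec s A x k + mat_vec s A y k"
  by (simp add: mat_vec_def distrib_left sum.distrib)

lemma mat_vec_scale: "mat_vec s A (\<lambda>j. a * y j) k = a * mat_vec s A y k"
  by (simp add: mat_vec_def sum_distrib_left ac_simps)

lemma mat_vec_diff: "mat_vec s A (\<lambda>j. x j - y j) k = mat_vec s A x k - mat_vec s A y k"
  for A :: "nat \<Rightarrow> nat \<Rightarrow> 'a::comm_ring"
  by (simp add: mat_vec_def right_diff_distrib sum_subtractf)

lemma mat_vec_restrict [simp]: "mat_vec s A (restrict z {..<s}) = mat_vec s A z"
  by (simp add: mat_vec_def)

lemma unit_vector_in_row_span: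
  fixes A :: "nat \<Rightarrow> nat \<Rightarrow> 'a::{finite,field}"
  assumes indep: "rows_lin_indep s A K" and K: "finite K" "card K = s" and j0: "j0 < s"
  obtains c where "\<forall>j<s. (\<Sum>i\<in>K. c i * A i j) = (if j = j0 then 1 else 0)"
proof -
  define comb where "comb c = restrict (\<lambda>j. \<Sum>i\<in>K. c i * A i j) {..<s}" for c :: "nat \<Rightarrow> 'a"
  have "inj_on comb (K \<rightarrow>\<^sub>E UNIV)"
  proof (rule inj_onI)
    fix c c' assume c: "c \<in> K \<rightarrow>\<^sub>E UNIV" "c' \<in> K \<rightarrow>\<^sub>E UNIV" and eq: "comb c = comb c'"
    have "\<forall>j<s. (\<Sum>i\<in>K. (c i - c' i) * A i j) = 0"
    proof (intro allI impI)
      fix j assume "j < s"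
      then show "(\<Sum>i\<in>K. (c i - c' i) * A i j) = 0"
        using fun_cong[OF eq, of j] by (simp add: comb_def left_diff_distrib sum_subtractf)
    qed
    then have "\<forall>i\<in>K. c i = c' i"
      using indep unfolding rows_lin_indep_def by (metis right_minus_eq)
    then show "c = c'" using c by (auto intro: PiE_ext)
  qed
  moreover have "comb ` (K \<rightarrow>\<^sub>E UNIV) \<subseteq> {..<s} \<rightarrow>\<^sub>E UNIV" unfolding comb_def by (intro image_subsetI) simp
  ultimately have "bij_betw comb (K \<rightarrow>\<^sub>E UNIV) ({..<s} \<rightarrow>\<^sub>E UNIV)"
    using K by (intro bij_betw_if_inj_on_card_eq) (auto simp: card_PiE finite_PiE)
  moreover have "restrict (\<lambda>j. if j = j0 then 1 else 0) {..<s} \<in> {..<s} \<rightarrow>\<^sub>E UNIV" by simp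
  ultimately obtain c where c: "comb c = restrict (\<lambda>j. if j = j0 then 1 else 0) {..<s}"
    unfolding bij_betw_def by (metis imageE)
  show thesis
  proof (intro that[of c] allI impI)
    fix j :: nat assume "j < s"
    then show "(\<Sum>i\<in>K. c i * A i j) = (if j = j0 then 1 else 0)"
      using fun_cong[OF c, of j] by (simp add: comb_def)
  qed
qed

lemma mat_vec_inj_on_rows:
  fixes A :: "nat \<Rightarrow> nat \<Rightarrow> 'a::{finite,field}"
  assumes "rows_lin_indep s A K" "finite K" "card K = s"
    and z: "z \<in> {..<s} \<rightarrow>\<^sub>E UNIV" "z' \<in> {..<s} \<rightarrow>\<^sub>E UNIV"
    and eq: "\<forall>k\<in>K. mat_vec s A z k = mat_vec s A z' k"
  shows "z = z'"
proof (rule PiE_ext[OF z])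
  fix j0 :: nat assume "j0 \<in> {..<s}"
  then obtain c where c: "\<forall>j<s. (\<Sum>i\<in>K. c i * A i j) = (if j = j0 then 1 else 0)"
    using unit_vector_in_row_span assms(1-3) by blast
  have coord: "y j0 = (\<Sum>i\<in>K. c i * mat_vec s A y i)" for y
  proof -
    have "(\<Sum>i\<in>K. c i * mat_vec s A y i) = (\<Sum>j<s. (\<Sum>i\<in>K. c i * A i j) * y j)"
      by (simp add: mat_vec_def sum_distrib_left sum_distrib_right mult.assoc sum.swap[of _ K])
    also have "\<dots> = (\<Sum>j<s. if j = j0 then y j else 0)" using c by (intro sum.cong) auto
    also have "\<dots> = y j0" using \<open>j0 \<in> {..<s}\<close> by simp
    finally show ?thesis by simp
  qed
  show "z j0 = z' j0" using eq by (simp add: coord[of z] coord[of z'])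
qed

lemma affine_map_restrict_bij:
  fixes A :: "nat \<Rightarrow> nat \<Rightarrow> 'a::{finite,field}"
  assumes indep: "rows_lin_indep s A K" and K: "finite K" "card K = s" and r: "\<forall>k\<in>K. r k \<noteq> 0"
  shows "bij_betw (\<lambda>z. restrict (\<lambda>k. r k * mat_vec s A z k + c k) K)
           ({..<s} \<rightarrow>\<^sub>E UNIV) (K \<rightarrow>\<^sub>E UNIV)"
proof (rule bij_betw_if_inj_on_card_eq)
  show "inj_on (\<lambda>z. restrict (\<lambda>k. r k * mat_vec s A z k + c k) K) ({..<s} \<rightarrow>\<^sub>E UNIV)"
  proof (rule inj_onI)
    fix z z' assume z: "z \<in> {..<s} \<rightarrow>\<^sub>E UNIV" "z' \<in> {..<s} \<rightarrow>\<^sub>E UNIV"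
      and eq: "restrict (\<lambda>k. r k * mat_vec s A z k + c k) K = restrict (\<lambda>k. r k * mat_vec s A z' k + c k) K"
    have "r k * mat_vec s A z k = r k * mat_vec s A z' k" if "k \<in> K" for k
      using fun_cong[OF eq, of k] that by simp
    then have "\<forall>k\<in>K. mat_vec s A z k = mat_vec s A z' k" using r by simp
    then show "z = z'" using mat_vec_inj_on_rows[OF indep K z] by blast
  qed
qed (use K in \<open>auto simp: card_PiE finite_PiE\<close>)

lemma M_t_rows_lin_indep:
  "A \<in> M_t t m s \<Longrightarrow> K \<subseteq> {..<m} \<Longrightarrow> card K = t \<Longrightarrow> rows_lin_indep s A K"
  unfolding M_t_def by blast

lemma sum_affine_map_eq_sum_PiE:
  fixes A :: "nat \<Rightarrow> nat \<Rightarrow> 'a::{finite,field}"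
  assumes "A \<in> M_t s m s" "K \<subseteq> {..<m}" "card K = s" "\<forall>k\<in>K. r k \<noteq> 0"
    and h: "\<And>d. h d = h (restrict d K)"
  shows "(\<Sum>z\<in>{..<s} \<rightarrow>\<^sub>E UNIV. h (\<lambda>k. r k * mat_vec s A z k + c k)) = (\<Sum>w\<in>K \<rightarrow>\<^sub>E UNIV. h w)"
proof -
  have "finite K" using assms(2) finite_subset by blast
  then have "bij_betw (\<lambda>z. restrict (\<lambda>k. r k * mat_vec s A z k + c k) K) ({..<s} \<rightarrow>\<^sub>E UNIV) (K \<rightarrow>\<^sub>E UNIV)"
    using assms(1-4) by (intro affine_map_restrict_bij M_t_rows_lin_indep) auto
  then show ?thesis by (subst h) (rule sum.reindex_bij_betw)
qed

lemma obtain_superset_with_card_n: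
  assumes "finite B" "K \<subseteq> B" "card K \<le> n" "n \<le> card B"
  obtains K' where "K \<subseteq> K'" "K' \<subseteq> B" "card K' = n"
proof -
  have "finite K" using assms(1,2) finite_subset by blast
  moreover have "n - card K \<le> card (B - K)" using assms by (simp add: card_Diff_subset \<open>finite K\<close>)
  then obtain T where T: "T \<subseteq> B - K" "card T = n - card K"
    by (rule obtain_subset_with_card_n)
  moreover have "finite T" using T(1) assms(1) finite_subset by blast
  ultimately have "card (K \<union> T) = card K + card T" by (intro card_Un_disjoint) auto
  then show thesis using T assms by (intro that[of "K \<union> T"]) auto
qed

definition radix_value :: "nat \<Rightarrow> nat \<Rightarrow> ('a \<Rightarrow> nat) \<Rightarrow> (nat \<Rightarrow> 'a) \<Rightarrow> nat" where
  "radix_value m q \<sigma> d = (\<Sum>k<m. \<sigma> (d k) * q ^ k)"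

lemma radix_value_power:
  "radix_value m q \<sigma> d ^ e = (\<Sum>ks\<in>{..<e} \<rightarrow>\<^sub>E {..<m}. \<Prod>i<e. \<sigma> (d (ks i)) * q ^ ks i)"
proof -
  have "radix_value m q \<sigma> d ^ e = (\<Prod>i<e. \<Sum>k<m. \<sigma> (d k) * q ^ k)"
    by (simp add: radix_value_def)
  also have "\<dots> = (\<Sum>ks\<in>{..<e} \<rightarrow>\<^sub>E {..<m}. \<Prod>i<e. \<sigma> (d (ks i)) * q ^ ks i)"
    by (rule prod_sum_PiE) auto
  finally show ?thesis .
qed

lemma power_sum_affine_line_invariant:
  fixes A :: "nat \<Rightarrow> nat \<Rightarrow> 'a::{finite,field}"
  assumes A: "A \<in> M_t s m s" and "s \<le> m" "e \<le> s" and r: "\<forall>k<m. r k \<noteq> 0"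
  shows "(\<Sum>z\<in>{..<s} \<rightarrow>\<^sub>E UNIV. radix_value m q \<sigma> (\<lambda>k. r k * mat_vec s A z k + c k) ^ e)
       = (\<Sum>z\<in>{..<s} \<rightarrow>\<^sub>E UNIV. radix_value m q \<sigma> (mat_vec s A z) ^ e)"
proof -
  define monomial where "monomial ks d = (\<Prod>i<e. \<sigma> (d (ks i)) * q ^ ks i)" for ks and d :: "nat \<Rightarrow> 'a"
  have monomial_sum: "(\<Sum>z\<in>{..<s} \<rightarrow>\<^sub>E UNIV. monomial ks (\<lambda>k. r k * mat_vec s A z k + c k))
                = (\<Sum>z\<in>{..<s} \<rightarrow>\<^sub>E UNIV. monomial ks (mat_vec s A z))"
    if ks: "ks \<in> {..<e} \<rightarrow>\<^sub>E {..<m}" for ks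
  proof -
    have "card (ks ` {..<e}) \<le> s" using card_image_le[of "{..<e}" ks] \<open>e \<le> s\<close> by simp
    moreover have "ks ` {..<e} \<subseteq> {..<m}" using ks by auto
    ultimately obtain K where K: "ks ` {..<e} \<subseteq> K" "K \<subseteq> {..<m}" "card K = s"
      using obtain_superset_with_card_n[of "{..<m}" "ks ` {..<e}" s] \<open>s \<le> m\<close> by auto
    have local: "monomial ks d = monomial ks (restrict d K)" for d
      using K(1) unfolding monomial_def by (intro prod.cong) auto
    have "(\<Sum>z\<in>{..<s} \<rightarrow>\<^sub>E UNIV. monomial ks (\<lambda>k. r k * mat_vec s A z k + c k))
        = (\<Sum>w\<in>K \<rightarrow>\<^sub>E UNIV. monomial ks w)"
      using r K(2) by (intro sum_affine_map_eq_sum_PiE[where h = "monomial ks", OF A K(2,3) _ local]) auto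
    moreover have "(\<Sum>z\<in>{..<s} \<rightarrow>\<^sub>E UNIV. monomial ks (\<lambda>k. 1 * mat_vec s A z k + 0))
        = (\<Sum>w\<in>K \<rightarrow>\<^sub>E UNIV. monomial ks w)"
      by (intro sum_affine_map_eq_sum_PiE[where h = "monomial ks", OF A K(2,3) _ local]) auto
    ultimately show ?thesis by simp
  qed
  let ?P = "{..<e} \<rightarrow>\<^sub>E {..<m}" and ?V = "{..<s} \<rightarrow>\<^sub>E (UNIV :: 'a set)"
  have "(\<Sum>z\<in>?V. radix_value m q \<sigma> (\<lambda>k. r k * mat_vec s A z k + c k) ^ e)
      = (\<Sum>z\<in>?V. \<Sum>ks\<in>?P. monomial ks (\<lambda>k. r k * mat_vec s A z k + c k))"
    by (simp only: radix_value_power monomial_def)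
  also have "\<dots> = (\<Sum>ks\<in>?P. \<Sum>z\<in>?V. monomial ks (\<lambda>k. r k * mat_vec s A z k + c k))"
    by (rule sum.swap)
  also have "\<dots> = (\<Sum>ks\<in>?P. \<Sum>z\<in>?V. monomial ks (mat_vec s A z))"
    using monomial_sum by (rule sum.cong[OF refl])
  also have "\<dots> = (\<Sum>z\<in>?V. \<Sum>ks\<in>?P. monomial ks (mat_vec s A z))"
    by (rule sum.swap)
  also have "\<dots> = (\<Sum>z\<in>?V. radix_value m q \<sigma> (mat_vec s A z) ^ e)"
    by (simp only: radix_value_power monomial_def)
  finally show ?thesis .
qed

lemma sum_digits_eq_mod: "(\<Sum>k<m. (n div q ^ k mod q) * q ^ k) = n mod q ^ m" for n q :: nat
proof (induction m)
  case (Suc m)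
  have "n mod q ^ Suc m = n mod (q ^ m * q)" by (simp only: power_Suc2)
  also have "\<dots> = q ^ m * (n div q ^ m mod q) + n mod q ^ m" by (rule mod_mult2_eq)
  finally show ?case using Suc by simp
qed simp

lemma radix_value_less:
  assumes "\<forall>a. \<sigma> a < q"
  shows "radix_value m q \<sigma> d < q ^ m"
proof (induction m)
  case (Suc m)
  have "radix_value (Suc m) q \<sigma> d = radix_value m q \<sigma> d + \<sigma> (d m) * q ^ m"
    by (simp add: radix_value_def)
  also have "\<dots> < (1 + \<sigma> (d m)) * q ^ m" using Suc by simp
  also have "\<dots> \<le> q * q ^ m" using assms by (intro mult_right_mono) (auto simp: Suc_le_eq)
  finally show ?case by simp
qed (simp add: radix_value_def)

lemma radix_value_restrict [simp]: "radix_value m q \<sigma> (restrict d {..<m}) = radix_value m q \<sigma> d"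
  by (simp add: radix_value_def)

lemma radix_value_bij:
  fixes \<sigma> :: "'a::finite \<Rightarrow> nat"
  defines "q \<equiv> CARD('a)"
  assumes \<sigma>: "bij_betw \<sigma> UNIV {..<q}"
  shows "bij_betw (radix_value m q \<sigma>) ({..<m} \<rightarrow>\<^sub>E UNIV) {..<q ^ m}"
proof -
  have "\<forall>a. \<sigma> a < q" using \<sigma> by (auto simp: bij_betw_def)
  then have "radix_value m q \<sigma> ` ({..<m} \<rightarrow>\<^sub>E UNIV) \<subseteq> {..<q ^ m}"
    using radix_value_less by blast
  moreover have "{..<q ^ m} \<subseteq> radix_value m q \<sigma> ` ({..<m} \<rightarrow>\<^sub>E UNIV)"
  proof
    fix n assume n: "n \<in> {..<q ^ m}"
    define d where "d = restrict (\<lambda>k. inv \<sigma> (n div q ^ k mod q)) {..<m}"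
    have "q > 0" unfolding q_def by (simp add: finite_UNIV_card_ge_0)
    then have digit: "\<sigma> (inv \<sigma> (n div q ^ k mod q)) = n div q ^ k mod q" for k
      using \<sigma> by (simp add: bij_betw_def f_inv_into_f)
    have "radix_value m q \<sigma> d = (\<Sum>k<m. (n div q ^ k mod q) * q ^ k)"
      unfolding radix_value_def d_def using digit by (intro sum.cong) auto
    also have "\<dots> = n mod q ^ m" by (rule sum_digits_eq_mod)
    finally have "radix_value m q \<sigma> d = n mod q ^ m" .
    then have "n = radix_value m q \<sigma> d" using n by simp
    moreover have "d \<in> {..<m} \<rightarrow>\<^sub>E UNIV" by (simp add: d_def)
    ultimately show "n \<in> radix_value m q \<sigma> ` ({..<m} \<rightarrow>\<^sub>E UNIV)" by blast
  qed
  ultimately have image: "radix_value m q \<sigma> ` ({..<m} \<rightarrow>\<^sub>E UNIV) = {..<q ^ m}" by blast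
  then have "inj_on (radix_value m q \<sigma>) ({..<m} \<rightarrow>\<^sub>E UNIV)"
    by (intro eq_card_imp_inj_on) (simp_all add: finite_PiE q_def)
  then show ?thesis using image by (simp add: bij_betw_def)
qed

lemma shifted_affine_map_bij:
  fixes A :: "nat \<Rightarrow> nat \<Rightarrow> 'a::{finite,field}"
  assumes A: "A \<in> M_t s (2*s) s" and r: "\<forall>k<2*s. r k \<noteq> 0"
  shows "bij_betw (\<lambda>(u, z). restrict (\<lambda>k. r k * mat_vec s A z k + c k + (if k < s then u k else 0)) {..<2*s})
           (({..<s} \<rightarrow>\<^sub>E UNIV) \<times> ({..<s} \<rightarrow>\<^sub>E UNIV)) ({..<2*s} \<rightarrow>\<^sub>E UNIV)"
proof (rule bij_betw_if_inj_on_card_eq)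
  let ?V = "{..<s} \<rightarrow>\<^sub>E (UNIV :: 'a set)"
  show "inj_on (\<lambda>(u, z). restrict (\<lambda>k. r k * mat_vec s A z k + c k + (if k < s then u k else 0)) {..<2*s})
          (?V \<times> ?V)"
  proof (rule inj_onI, clarify)
    fix u z u' z' assume V: "u \<in> ?V" "z \<in> ?V" "u' \<in> ?V" "z' \<in> ?V"
      and eq: "restrict (\<lambda>k. r k * mat_vec s A z k + c k + (if k < s then u k else 0)) {..<2*s}
             = restrict (\<lambda>k. r k * mat_vec s A z' k + c k + (if k < s then u' k else 0)) {..<2*s}"
    have eqs: "\<forall>k\<in>{s..<2*s}. mat_vec s A z k = mat_vec s A z' k"
    proof
      fix k assume k: "k \<in> {s..<2*s}"
      then have "r k \<noteq> 0" using r by simp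
      then show "mat_vec s A z k = mat_vec s A z' k" using fun_cong[OF eq, of k] k by simp
    qed
    have indep: "rows_lin_indep s A {s..<2*s}" using A by (rule M_t_rows_lin_indep) auto
    have z: "z = z'" by (rule mat_vec_inj_on_rows[OF indep _ _ V(2,4) eqs]) simp_all
    have "u k = u' k" if "k < s" for k using fun_cong[OF eq, of k] that z by simp
    then show "u = u' \<and> z = z'" using V z by (auto intro: PiE_ext)
  qed
qed (simp_all add: finite_PiE card_cartesian_product mult_2 power_add image_subset_iff split_beta)

lemma two_slope_map_bij:
  fixes A :: "nat \<Rightarrow> nat \<Rightarrow> 'a::{finite,field}"
  assumes A: "A \<in> M_t s (2*s) s" and "l1 \<noteq> l2"
  shows "bij_betw (\<lambda>(x, y). restrict (\<lambda>k. mat_vec s A x k + (if k < s then l1 else l2) * mat_vec s A y k + c k) {..<2*s})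
           (({..<s} \<rightarrow>\<^sub>E UNIV) \<times> ({..<s} \<rightarrow>\<^sub>E UNIV)) ({..<2*s} \<rightarrow>\<^sub>E UNIV)"
proof (rule bij_betw_if_inj_on_card_eq)
  let ?V = "{..<s} \<rightarrow>\<^sub>E (UNIV :: 'a set)"
  show "inj_on (\<lambda>(x, y). restrict (\<lambda>k. mat_vec s A x k + (if k < s then l1 else l2) * mat_vec s A y k + c k) {..<2*s})
          (?V \<times> ?V)"
  proof (rule inj_onI, clarify)
    fix x y x' y' assume V: "x \<in> ?V" "y \<in> ?V" "x' \<in> ?V" "y' \<in> ?V"
      and eq: "restrict (\<lambda>k. mat_vec s A x k + (if k < s then l1 else l2) * mat_vec s A y k + c k) {..<2*s}
             = restrict (\<lambda>k. mat_vec s A x' k + (if k < s then l1 else l2) * mat_vec s A y' k + c k) {..<2*s}"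
    have slope: "x j + l * y j = x' j + l * y' j"
      if K: "K \<subseteq> {..<2*s}" "card K = s" and l: "\<forall>k\<in>K. (if k < s then l1 else l2) = l" and "j < s"
      for K l j
    proof -
      have "mat_vec s A x k + l * mat_vec s A y k = mat_vec s A x' k + l * mat_vec s A y' k"
        if "k \<in> K" for k
        using fun_cong[OF eq, of k] K(1) l that by auto
      then have "\<forall>k\<in>K. mat_vec s A (restrict (\<lambda>j. x j + l * y j) {..<s}) k
                = mat_vec s A (restrict (\<lambda>j. x' j + l * y' j) {..<s}) k"
        by (simp add: mat_vec_add mat_vec_scale)
      moreover have "rows_lin_indep s A K" using A K by (rule M_t_rows_lin_indep)
      moreover have "finite K" using K(1) finite_subset by blast
      ultimately have "restrict (\<lambda>j. x j + l * y j) {..<s} = restrict (\<lambda>j. x' j + l * y' j) {..<s}"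
        using K(2) by (intro mat_vec_inj_on_rows[of s A K]) simp_all
      from fun_cong[OF this, of j] show ?thesis using \<open>j < s\<close> by simp
    qed
    have "x j = x' j \<and> y j = y' j" if "j < s" for j
    proof -
      have "x j + l1 * y j = x' j + l1 * y' j" by (rule slope[of "{..<s}"]) (use that in auto)
      moreover have "x j + l2 * y j = x' j + l2 * y' j" by (rule slope[of "{s..<2*s}"]) (use that in auto)
      ultimately have "(x j + l1 * y j) - (x j + l2 * y j) = (x' j + l1 * y' j) - (x' j + l2 * y' j)"
        by simp
      then have "(l1 - l2) * y j = (l1 - l2) * y' j" by (simp add: algebra_simps)
      then show ?thesis using \<open>l1 \<noteq> l2\<close> \<open>x j + l1 * y j = x' j + l1 * y' j\<close> by simp
    qed
    then show "x = x' \<and> y = y'" using V by (auto intro: PiE_ext)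
  qed
qed (simp_all add: finite_PiE card_cartesian_product mult_2 power_add image_subset_iff split_beta)

lemma bij_betw_add_pair:
  assumes \<iota>: "bij_betw \<iota> A {..<n}" and "a \<notin> A" "b \<notin> A" "a \<noteq> b"
  shows "bij_betw (\<lambda>x. if x = a then 0 else if x = b then Suc n else Suc (\<iota> x))
           (insert a (insert b A)) {..<n + 2}"
proof (rule bij_betw_if_inj_on_card_eq)
  have "finite A" using \<iota> bij_betw_finite by blast
  then show "card (insert a (insert b A)) = card {..<n + 2}"
    using assms bij_betw_same_card[OF \<iota>] by simp
  show "inj_on (\<lambda>x. if x = a then 0 else if x = b then Suc n else Suc (\<iota> x)) (insert a (insert b A))"
    using \<iota> \<open>a \<noteq> b\<close> by (auto simp: bij_betw_def inj_on_def)
  show "(\<lambda>x. if x = a then 0 else if x = b then Suc n else Suc (\<iota> x)) ` insert a (insert b A)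
        \<subseteq> {..<n + 2}"
    using \<iota> by (auto dest: bij_betw_apply)
qed simp

lemma ex_enumeration_reversing_involution:
  assumes "finite A" and "\<forall>a\<in>A. f a \<in> A \<and> f (f a) = a"
    and "\<forall>a\<in>A. \<forall>b\<in>A. f a = a \<longrightarrow> f b = b \<longrightarrow> a = b"
  shows "\<exists>\<iota>. bij_betw \<iota> A {..<card A} \<and> (\<forall>a\<in>A. \<iota> (f a) = card A - 1 - \<iota> a)"
  using assms
proof (induction "card A" arbitrary: A rule: less_induct)
  case less
  show ?case
  proof (cases "\<exists>a\<in>A. f a \<noteq> a")
    case True
    then obtain a where a: "a \<in> A" "f a \<noteq> a" by blast
    define b where "b = f a"
    define A' where "A' = A - {a, b}"
    have b: "b \<in> A" "f b = a" "b \<noteq> a" using a less.prems(2) by (auto simp: b_def)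
    have A: "A = insert a (insert b A')" and "a \<notin> A'" "b \<notin> A'"
      using a b by (auto simp: A'_def)
    have "finite A'" using less.prems(1) by (simp add: A'_def)
    then have card_A: "card A = card A' + 2"
      using A \<open>a \<notin> A'\<close> \<open>b \<notin> A'\<close> b(3) by simp
    have f_A': "f x \<in> A' \<and> f (f x) = x" if "x \<in> A'" for x
    proof -
      have x: "x \<in> A" "x \<noteq> a" "x \<noteq> b" using that by (auto simp: A'_def)
      then have fx: "f x \<in> A" "f (f x) = x" using less.prems(2) by auto
      have "f x \<noteq> a" using fx(2) x(3) by (auto simp: b_def)
      moreover have "f x \<noteq> b" using fx(2) x(2) b(2) by auto
      ultimately show ?thesis using fx by (simp add: A'_def)
    qed
    have "card A' < card A" using card_A by simp
    moreover have "\<forall>x\<in>A'. \<forall>y\<in>A'. f x = x \<longrightarrow> f y = y \<longrightarrow> x = y"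
      using less.prems(3) by (simp add: A'_def)
    ultimately obtain \<iota>' where \<iota>': "bij_betw \<iota>' A' {..<card A'}" "\<forall>x\<in>A'. \<iota>' (f x) = card A' - 1 - \<iota>' x"
      using less.hyps[of A'] \<open>finite A'\<close> f_A' by blast
    define \<iota> where "\<iota> = (\<lambda>x. if x = a then 0 else if x = b then Suc (card A') else Suc (\<iota>' x))"
    have "bij_betw \<iota> A {..<card A}"
      unfolding \<iota>_def card_A
      by (subst A, rule bij_betw_add_pair) (use \<iota>' \<open>a \<notin> A'\<close> \<open>b \<notin> A'\<close> b(3) in auto)
    moreover have "\<iota> (f x) = card A - 1 - \<iota> x" if "x \<in> A" for x
    proof -
      consider "x = a" | "x = b" | "x \<in> A'" using \<open>x \<in> A\<close> A by blast
      then show ?thesis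
      proof cases
        case 3
        then have "\<iota>' x < card A'" using \<iota>'(1) by (auto dest: bij_betw_apply)
        moreover have "f x \<in> A'" using f_A' 3 by blast
        ultimately show ?thesis
          using 3 \<iota>'(2) \<open>a \<notin> A'\<close> \<open>b \<notin> A'\<close> by (auto simp: \<iota>_def card_A)
      qed (use b card_A in \<open>auto simp: \<iota>_def b_def\<close>)
    qed
    ultimately show ?thesis by blast
  next
    case False
    then have "A \<subseteq> {a}" if "a \<in> A" for a using less.prems(3) that by blast
    then have "A = {} \<or> (\<exists>a. A = {a})" by blast
    then show ?thesis by (elim disjE exE) (auto intro!: exI[of _ "\<lambda>_. 0"] simp: bij_betw_def)
  qed
qed

lemma complement_fixpoint_unique:
  fixes x y :: "nat \<Rightarrow> 'a::field"
  assumes "0 < t" and V: "x \<in> {..<t} \<rightarrow>\<^sub>E UNIV" "y \<in> {..<t} \<rightarrow>\<^sub>E UNIV"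
    and fixed: "restrict (\<lambda>j. 1 - x j) {..<t} = x" "restrict (\<lambda>j. 1 - y j) {..<t} = y"
  shows "x = y"
proof (rule PiE_ext[OF V])
  fix j assume "j \<in> {..<t}"
  then have "1 - x j = x j" "1 - y j = y j"
    using fun_cong[OF fixed(1), of j] fun_cong[OF fixed(2), of j] by simp_all
  then have "1 = x j + x j" "1 = y j + y j" by (simp_all only: diff_eq_eq)
  then have "1 = 2 * x j" "1 = 2 * y j" by (simp_all only: mult_2)
  then have "2 * x j = 2 * y j" "(2::'a) \<noteq> 0" by auto
  then show "x j = y j" by simp
qed

lemma ex_two_distinct_not_0_1_minus_1:
  assumes "CARD('a) \<ge> 4"
  obtains l1 l2 :: "'a::{finite,field}" where "l1 \<notin> {0, 1, -1}" "l2 \<notin> {0, 1, -1}" "l1 \<noteq> l2"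
proof -
  have avoid: "\<exists>x::'a. x \<notin> {a, b, c}" for a b c
  proof (rule ccontr)
    assume "\<nexists>x. x \<notin> {a, b, c}"
    then have "CARD('a) \<le> card (set [a, b, c])" by (intro card_mono) auto
    also have "\<dots> \<le> 3" using card_length[of "[a, b, c]"] by simp
    finally show False using assms by simp
  qed
  then obtain l1 :: 'a where l1: "l1 \<notin> {0, 1, -1}" by blast
  show thesis
  proof (cases "(2::'a) = 0")
    case True
    then have "-1 = (1::'a)" by (simp add: neg_eq_iff_add_eq_0)
    moreover obtain l2 :: 'a where "l2 \<notin> {0, 1, l1}" using avoid by blast
    ultimately show thesis using l1 by (intro that[of l1 l2]) auto
  next
    case False
    have "-l1 \<noteq> l1"
    proof
      assume "-l1 = l1"
      then have "l1 + l1 = 0" by (simp only: neg_eq_iff_add_eq_0)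
      then have "2 * l1 = 0" by (simp only: mult_2)
      then show False using False l1 by simp
    qed
    then show thesis using l1 by (intro that[of l1 "-l1"]) (auto simp: minus_equation_iff)
  qed
qed

lemma ex_enumeration_reversing_complement:
  assumes "0 < t"
  obtains \<iota> :: "(nat \<Rightarrow> 'a::{finite,field}) \<Rightarrow> nat"
  where "bij_betw \<iota> ({..<t} \<rightarrow>\<^sub>E UNIV) {..<CARD('a) ^ t}"
    and "\<forall>x\<in>{..<t} \<rightarrow>\<^sub>E UNIV. \<iota> (restrict (\<lambda>j. 1 - x j) {..<t}) = CARD('a) ^ t - 1 - \<iota> x"
proof -
  define complement where "complement x = restrict (\<lambda>j. 1 - x j) {..<t}" for x :: "nat \<Rightarrow> 'a"
  let ?V = "{..<t} \<rightarrow>\<^sub>E (UNIV :: 'a set)"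
  have complement_in: "complement x \<in> ?V" for x by (simp add: complement_def)
  have "complement (complement x) = x" if "x \<in> ?V" for x
  proof (rule PiE_ext[OF complement_in that])
    show "complement (complement x) j = x j" if "j \<in> {..<t}" for j
      using that by (simp add: complement_def)
  qed
  with complement_in have involution: "\<forall>x\<in>?V. complement x \<in> ?V \<and> complement (complement x) = x"
    by blast
  have unique_fixpoint: "\<forall>x\<in>?V. \<forall>y\<in>?V. complement x = x \<longrightarrow> complement y = y \<longrightarrow> x = y"
  proof (intro ballI impI)
    fix x y assume xy: "x \<in> ?V" "y \<in> ?V" "complement x = x" "complement y = y"
    show "x = y"
      by (rule complement_fixpoint_unique[of t]) (use assms xy in \<open>simp_all add: complement_def\<close>)
  qed
  have "finite ?V" by (simp add: finite_PiE)
  from ex_enumeration_reversing_involution[OF this involution unique_fixpoint]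
  obtain \<iota> where "bij_betw \<iota> ?V {..<card ?V}" "\<forall>x\<in>?V. \<iota> (complement x) = card ?V - 1 - \<iota> x"
    by blast
  then show thesis by (intro that) (simp_all add: complement_def)
qed

lemma real_power_sums_eq_S_pow:
  assumes "(\<Sum>s<n. \<Sum>i<n. g s i ^ p) = (\<Sum>k<n\<^sup>2. k ^ p)"
  shows "(\<Sum>s<n. \<Sum>i<n. real (g s i) ^ p) = real n * S_pow p n"
proof (cases "n = 0")
  case False
  have "(\<Sum>s<n. \<Sum>i<n. real (g s i) ^ p) = real (\<Sum>s<n. \<Sum>i<n. g s i ^ p)" by simp
  also have "\<dots> = (\<Sum>k<n\<^sup>2. real k ^ p)" using assms by simp
  finally show ?thesis using False by (simp add: S_pow_def)
qed (simp add: S_pow_def)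

locale cms_construction =
  fixes t :: nat and A :: "nat \<Rightarrow> nat \<Rightarrow> 'a::{finite,field}" and \<sigma> :: "'a \<Rightarrow> nat"
    and l1 l2 :: 'a and \<iota> :: "(nat \<Rightarrow> 'a) \<Rightarrow> nat"
  assumes A: "A \<in> M_t t (2*t) t"
    and \<sigma>: "bij_betw \<sigma> UNIV {..<CARD('a)}"
    and l1: "l1 \<notin> {0, 1, -1}" and l2: "l2 \<notin> {0, 1, -1}" and l1_l2: "l1 \<noteq> l2"
    and \<iota>: "bij_betw \<iota> ({..<t} \<rightarrow>\<^sub>E UNIV) {..<CARD('a) ^ t}"
    and \<iota>_complement: "\<forall>x\<in>{..<t} \<rightarrow>\<^sub>E UNIV.
          \<iota> (restrict (\<lambda>j. 1 - x j) {..<t}) = CARD('a) ^ t - 1 - \<iota> x"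
begin

abbreviation V :: "(nat \<Rightarrow> 'a) set" where "V \<equiv> {..<t} \<rightarrow>\<^sub>E UNIV"

definition lam :: "nat \<Rightarrow> 'a" where "lam k = (if k < t then l1 else l2)"

definition vec :: "nat \<Rightarrow> nat \<Rightarrow> 'a" where "vec = inv_into V \<iota>"

definition cell :: "(nat \<Rightarrow> 'a) \<Rightarrow> (nat \<Rightarrow> 'a) \<Rightarrow> (nat \<Rightarrow> 'a) \<Rightarrow> nat \<Rightarrow> 'a" where
  "cell u x y = (\<lambda>k. mat_vec t A x k + lam k * mat_vec t A y k + (if k < t then u k else 0))"

definition square :: "nat \<Rightarrow> nat \<Rightarrow> nat \<Rightarrow> nat" where
  "square s i j = radix_value (2*t) CARD('a) \<sigma> (cell (vec s) (vec i) (vec j))"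

definition line_power_sum :: "nat \<Rightarrow> nat" where
  "line_power_sum e = (\<Sum>z\<in>V. radix_value (2*t) CARD('a) \<sigma> (mat_vec t A z) ^ e)"

lemma vec_bij: "bij_betw vec {..<CARD('a) ^ t} V"
  unfolding vec_def by (rule bij_betw_inv_into[OF \<iota>])

lemma vec_in: "i < CARD('a) ^ t \<Longrightarrow> vec i \<in> V"
  using vec_bij by (auto simp: bij_betw_def)

lemma vec_\<iota> [simp]: "x \<in> V \<Longrightarrow> vec (\<iota> x) = x"
  using \<iota> by (simp add: vec_def bij_betw_def inv_into_f_f)

lemma sum_reindex_\<iota>: "(\<Sum>i<CARD('a) ^ t. f i) = (\<Sum>x\<in>V. f (\<iota> x))"
  using sum.reindex_bij_betw[OF \<iota>, of f] by simp

lemma lam_nonzero: "lam k \<noteq> 0" "1 + lam k \<noteq> 0" "1 - lam k \<noteq> 0"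
  using l1 l2 by (auto simp: lam_def add_eq_0_iff)

lemma power_sums_along_line:
  assumes r: "\<forall>k. r k \<noteq> 0"
    and g: "\<And>s z. s < CARD('a) ^ t \<Longrightarrow> z \<in> V \<Longrightarrow>
              g s (\<iota> z) = radix_value (2*t) CARD('a) \<sigma> (\<lambda>k. r k * mat_vec t A z k + c k + (if k < t then vec s k else 0))"
  shows "s < CARD('a) ^ t \<Longrightarrow> e \<le> t \<Longrightarrow> (\<Sum>i<CARD('a) ^ t. g s i ^ e) = line_power_sum e"
    and "(\<Sum>s<CARD('a) ^ t. \<Sum>i<CARD('a) ^ t. g s i ^ p) = (\<Sum>k<(CARD('a) ^ t)\<^sup>2. k ^ p)"
proof -
  assume "s < CARD('a) ^ t" "e \<le> t"
  then have "(\<Sum>i<CARD('a) ^ t. g s i ^ e)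
      = (\<Sum>z\<in>V. radix_value (2*t) CARD('a) \<sigma> (\<lambda>k. r k * mat_vec t A z k + (c k + (if k < t then vec s k else 0))) ^ e)"
    by (simp add: sum_reindex_\<iota> g add.assoc)
  also have "\<dots> = line_power_sum e"
    unfolding line_power_sum_def using A \<open>e \<le> t\<close> r by (intro power_sum_affine_line_invariant) auto
  finally show "(\<Sum>i<CARD('a) ^ t. g s i ^ e) = line_power_sum e" .
next
  let ?d = "\<lambda>(u, z). restrict (\<lambda>k. r k * mat_vec t A z k + c k + (if k < t then u k else 0)) {..<2*t}"
  have "(\<Sum>s<CARD('a) ^ t. \<Sum>i<CARD('a) ^ t. g s i ^ p)
      = (\<Sum>s<CARD('a) ^ t. \<Sum>z\<in>V. radix_value (2*t) CARD('a) \<sigma> (?d (vec s, z)) ^ p)"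
    by (simp add: sum_reindex_\<iota> g)
  also have "\<dots> = (\<Sum>u\<in>V. \<Sum>z\<in>V. radix_value (2*t) CARD('a) \<sigma> (?d (u, z)) ^ p)"
    by (rule sum.reindex_bij_betw[OF vec_bij])
  also have "\<dots> = (\<Sum>w\<in>V \<times> V. radix_value (2*t) CARD('a) \<sigma> (?d w) ^ p)"
    by (simp add: sum.cartesian_product split_def cong: if_cong)
  also have "\<dots> = (\<Sum>d\<in>{..<2*t} \<rightarrow>\<^sub>E UNIV. radix_value (2*t) CARD('a) \<sigma> d ^ p)"
    using A r by (intro sum.reindex_bij_betw shifted_affine_map_bij) auto
  also have "\<dots> = (\<Sum>k<CARD('a) ^ (2*t). k ^ p)"
    by (rule sum.reindex_bij_betw[OF radix_value_bij[OF \<sigma>]])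
  finally show "(\<Sum>s<CARD('a) ^ t. \<Sum>i<CARD('a) ^ t. g s i ^ p) = (\<Sum>k<(CARD('a) ^ t)\<^sup>2. k ^ p)"
    by (simp add: power_mult[symmetric] mult.commute)
qed

text \<open>Rows, columns and both diagonals of a square, each written literally in the shape
  r k * A z + c k of the lines above (hence the factor 1 and the summand 0).\<close>

lemma square_row: "\<lbrakk>s < CARD('a) ^ t; z \<in> V\<rbrakk> \<Longrightarrow> square s i (\<iota> z) =
    radix_value (2*t) CARD('a) \<sigma> (\<lambda>k. lam k * mat_vec t A z k + mat_vec t A (vec i) k + (if k < t then vec s k else 0))"
  by (simp add: square_def cell_def ac_simps)

lemma square_column: "\<lbrakk>s < CARD('a) ^ t; z \<in> V\<rbrakk> \<Longrightarrow> square s (\<iota> z) j =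
    radix_value (2*t) CARD('a) \<sigma> (\<lambda>k. 1 * mat_vec t A z k + lam k * mat_vec t A (vec j) k + (if k < t then vec s k else 0))"
  by (simp add: square_def cell_def)

lemma square_diagonal: "\<lbrakk>s < CARD('a) ^ t; z \<in> V\<rbrakk> \<Longrightarrow> square s (\<iota> z) (\<iota> z) =
    radix_value (2*t) CARD('a) \<sigma> (\<lambda>k. (1 + lam k) * mat_vec t A z k + 0 + (if k < t then vec s k else 0))"
  by (simp add: square_def cell_def algebra_simps)

lemma vec_complement: "z \<in> V \<Longrightarrow> vec (CARD('a) ^ t - 1 - \<iota> z) = restrict (\<lambda>j. 1 - z j) {..<t}"
  using \<iota>_complement vec_\<iota>[of "restrict (\<lambda>j. 1 - z j) {..<t}"] by simp

lemma square_antidiagonal: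
  assumes "s < CARD('a) ^ t" "z \<in> V"
  shows "square s (\<iota> z) (CARD('a) ^ t - 1 - \<iota> z) = radix_value (2*t) CARD('a) \<sigma>
           (\<lambda>k. (1 - lam k) * mat_vec t A z k + lam k * mat_vec t A (\<lambda>_. 1) k + (if k < t then vec s k else 0))"
  using vec_complement[OF assms(2)] assms
  by (simp add: square_def cell_def mat_vec_diff algebra_simps)

lemma square_bij:
  assumes "s < CARD('a) ^ t"
  shows "bij_betw (\<lambda>(i, j). square s i j) ({..<CARD('a) ^ t} \<times> {..<CARD('a) ^ t}) {..<(CARD('a) ^ t)\<^sup>2}"
proof -
  have bij: "bij_betw (radix_value (2*t) CARD('a) \<sigma> \<circ>
                  (\<lambda>(x, y). restrict (\<lambda>k. mat_vec t A x k + lam k * mat_vec t A y k + (if k < t then vec s k else 0)) {..<2*t})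
                  \<circ> map_prod vec vec)
          ({..<CARD('a) ^ t} \<times> {..<CARD('a) ^ t}) {..<CARD('a) ^ (2*t)}"
    using A l1_l2
    by (intro bij_betw_trans[OF bij_betw_map_prod[OF vec_bij vec_bij]] bij_betw_trans[OF _ radix_value_bij[OF \<sigma>]])
      (simp add: lam_def two_slope_map_bij)
  have square: "(CARD('a) ^ t)\<^sup>2 = CARD('a) ^ (2*t)" by (simp add: power_mult[symmetric] mult.commute)
  show ?thesis
    unfolding square using bij by (rule bij_betw_cong[THEN iffD1, rotated]) (auto simp: square_def cell_def)
qed

lemma row_power_sums:
  "s < CARD('a) ^ t \<Longrightarrow> e \<le> t \<Longrightarrow> (\<Sum>j<CARD('a) ^ t. square s i j ^ e) = line_power_sum e"
  "(\<Sum>s<CARD('a) ^ t. \<Sum>j<CARD('a) ^ t. square s i j ^ p) = (\<Sum>k<(CARD('a) ^ t)\<^sup>2. k ^ p)"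
  using power_sums_along_line[of lam "\<lambda>s j. square s i j" "mat_vec t A (vec i)", OF _ square_row]
    lam_nonzero(1) by auto

lemma column_power_sums:
  "s < CARD('a) ^ t \<Longrightarrow> e \<le> t \<Longrightarrow> (\<Sum>i<CARD('a) ^ t. square s i j ^ e) = line_power_sum e"
  "(\<Sum>s<CARD('a) ^ t. \<Sum>i<CARD('a) ^ t. square s i j ^ p) = (\<Sum>k<(CARD('a) ^ t)\<^sup>2. k ^ p)"
  using power_sums_along_line[of "\<lambda>_. 1" "\<lambda>s i. square s i j" "\<lambda>k. lam k * mat_vec t A (vec j) k",
      OF _ square_column]
  by auto

lemma diagonal_power_sums:
  "s < CARD('a) ^ t \<Longrightarrow> e \<le> t \<Longrightarrow> (\<Sum>i<CARD('a) ^ t. square s i i ^ e) = line_power_sum e"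
  "(\<Sum>s<CARD('a) ^ t. \<Sum>i<CARD('a) ^ t. square s i i ^ p) = (\<Sum>k<(CARD('a) ^ t)\<^sup>2. k ^ p)"
  using power_sums_along_line[of "\<lambda>k. 1 + lam k" "\<lambda>s i. square s i i" "\<lambda>_. 0", OF _ square_diagonal]
    lam_nonzero(2) by auto

lemma antidiagonal_power_sums:
  "s < CARD('a) ^ t \<Longrightarrow> e \<le> t \<Longrightarrow>
     (\<Sum>i<CARD('a) ^ t. square s i (CARD('a) ^ t - 1 - i) ^ e) = line_power_sum e"
  "(\<Sum>s<CARD('a) ^ t. \<Sum>i<CARD('a) ^ t. square s i (CARD('a) ^ t - 1 - i) ^ p) = (\<Sum>k<(CARD('a) ^ t)\<^sup>2. k ^ p)"
  using power_sums_along_line[of "\<lambda>k. 1 - lam k" "\<lambda>s i. square s i (CARD('a) ^ t - 1 - i)"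
      "\<lambda>k. lam k * mat_vec t A (\<lambda>_. 1) k", OF _ square_antidiagonal]
    lam_nonzero(3) by auto

lemma square_is_MS:
  assumes "s < CARD('a) ^ t"
  shows "is_MS (CARD('a) ^ t) t (square s)"
proof -
  have "\<exists>c. (\<forall>i<CARD('a) ^ t. (\<Sum>j<CARD('a) ^ t. square s i j ^ e) = c) \<and> (\<forall>j<CARD('a) ^ t. (\<Sum>i<CARD('a) ^ t. square s i j ^ e) = c) \<and>
          (\<Sum>i<CARD('a) ^ t. square s i i ^ e) = c \<and> (\<Sum>i<CARD('a) ^ t. square s i (CARD('a) ^ t - 1 - i) ^ e) = c"
    if "e \<in> {1..t}" for e
    using assms that row_power_sums(1) column_power_sums(1) diagonal_power_sums(1)
      antidiagonal_power_sums(1)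
    by (intro exI[of _ "line_power_sum e"]) simp
  then show ?thesis using square_bij[OF assms] unfolding is_MS_def by blast
qed

lemma square_inj: "inj_on square {..<CARD('a) ^ t}"
proof (rule inj_onI)
  fix s s' assume s: "s \<in> {..<CARD('a) ^ t}" "s' \<in> {..<CARD('a) ^ t}" and eq: "square s = square s'"
  let ?x = "vec 0"
  have "radix_value (2*t) CARD('a) \<sigma> (restrict (cell (vec s) ?x ?x) {..<2*t})
      = radix_value (2*t) CARD('a) \<sigma> (restrict (cell (vec s') ?x ?x) {..<2*t})"
    using fun_cong[OF fun_cong[OF eq, of 0], of 0] by (simp add: square_def)
  then have cells: "restrict (cell (vec s) ?x ?x) {..<2*t} = restrict (cell (vec s') ?x ?x) {..<2*t}"
    using radix_value_bij[OF \<sigma>, of "2*t"] by (auto simp: bij_betw_def inj_on_def)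
  have "vec s = vec s'"
  proof (rule PiE_ext[OF vec_in vec_in])
    show "s < CARD('a) ^ t" "s' < CARD('a) ^ t" using s by auto
    show "vec s k = vec s' k" if "k \<in> {..<t}" for k
      using fun_cong[OF cells, of k] that by (simp add: cell_def)
  qed
  then show "s = s'" using inj_onD[OF bij_betw_imp_inj_on[OF vec_bij] _ s] by blast
qed

theorem square_is_CMS: "is_CMS (CARD('a) ^ t) (CARD('a) ^ t) t square"
  unfolding is_CMS_def
  by (intro conjI allI impI square_inj square_is_MS real_power_sums_eq_S_pow row_power_sums(2)
      column_power_sums(2) diagonal_power_sums(2) antidiagonal_power_sums(2)) assumption

end

theorem lemma3p4:
  fixes t :: nat
  assumes "t \<ge> 2"
    and "card (UNIV :: 'a set) \<ge> 4"
    and "(M_t t (2*t) t :: (nat \<Rightarrow> nat \<Rightarrow> 'a::{finite,field}) set) \<noteq> {}"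
  shows "\<exists>B. is_CMS (card (UNIV :: 'a set) ^ t) (card (UNIV :: 'a set) ^ t) t B"
proof -
  obtain A :: "nat \<Rightarrow> nat \<Rightarrow> 'a" where A: "A \<in> M_t t (2*t) t" using assms(3) by blast
  obtain \<sigma> :: "'a \<Rightarrow> nat" where \<sigma>: "bij_betw \<sigma> UNIV {..<CARD('a)}"
    using ex_bij_betw_finite_nat[of "UNIV :: 'a set"] by (auto simp: atLeast0LessThan)
  obtain l1 l2 :: 'a where l: "l1 \<notin> {0, 1, -1}" "l2 \<notin> {0, 1, -1}" "l1 \<noteq> l2"
    using assms(2) by (rule ex_two_distinct_not_0_1_minus_1)
  have "0 < t" using assms(1) by simp
  then obtain \<iota> :: "(nat \<Rightarrow> 'a) \<Rightarrow> nat" where \<iota>: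
    "bij_betw \<iota> ({..<t} \<rightarrow>\<^sub>E UNIV) {..<CARD('a) ^ t}"
    "\<forall>x\<in>{..<t} \<rightarrow>\<^sub>E UNIV. \<iota> (restrict (\<lambda>j. 1 - x j) {..<t}) = CARD('a) ^ t - 1 - \<iota> x"
    by (rule ex_enumeration_reversing_complement)
  interpret cms_construction t A \<sigma> l1 l2 \<iota>
    by unfold_locales (use A \<sigma> l \<iota> in simp_all)
  show ?thesis using square_is_CMS by blast
qed

end
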